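(* Consider the system $$\frac{df}{dt}= r\alpha f m(1-f-m)-(1+h)f,\qquad \frac{dm}{dt}=(1-r)\alpha f m(1-f-m)+(s-1)m,$$ with $0<r<1$, $\alpha>0$, $h\ge 0$, $0\le s<1$, and let $\mu=\frac{(1-r)(1+h)}{r(1-s)}$. Let $E_i^*=(f_i^*,\mu f_i^* )$ be an interior equilibrium, where $f_i^*$ is a positive root of $rα\mu f(1-(1+\mu)f)=1+h$. If $$\frac{r(1-s)}{2\{1+h-r(h+s)\}}<f^*_i<\frac{r(1-s)}{1+h-r(h+s)},$$ then $E_i^*$ is locally asymptotically stable.
   Context: Nondimensionalized FHMS (female harvesting, male stocking) model without Allee effect; $f,m$ are scaled female and male densities, $r$ the primary sex ratio, $h$ the scaled harvesting rate, $s$ the scaled stocking rate. Interior equilibria are those with $f>0,m>0$; they satisfy $m=\mu f$. *)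

theory Defs
  imports "HOL-Analysis.Analysis"
begin

definition fhms_field :: "real \<Rightarrow> real \<Rightarrow> real \<Rightarrow> real \<Rightarrow> real \<times> real \<Rightarrow> real \<times> real" where
  "fhms_field r \<alpha> h s = (\<lambda>(f, m).
     (r * \<alpha> * f * m * (1 - f - m) - (1 + h) * f,
      (1 - r) * \<alpha> * f * m * (1 - f - m) + (s - 1) * m))"

definition fhms_mu :: "real \<Rightarrow> real \<Rightarrow> real \<Rightarrow> real" where
  "fhms_mu r h s = ((1 - r) * (1 + h)) / (r * (1 - s))"

definition ode_solution :: "('a::real_normed_vector \<Rightarrow> 'a) \<Rightarrow> (real \<Rightarrow> 'a) \<Rightarrow> real set \<Rightarrow> bool" where
  "ode_solution F x I \<longleftrightarrow> (\<forall>t\<in>I. (x has_vector_derivative F (x t)) (at t within I))"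

definition loc_asym_stable :: "('a::real_normed_vector \<Rightarrow> 'a) \<Rightarrow> 'a \<Rightarrow> bool" where
  "loc_asym_stable F e \<longleftrightarrow>
     (\<forall>\<epsilon>>0. \<exists>\<delta>>0. \<forall>T>0. \<forall>x. ode_solution F x {0..<T} \<and> dist (x 0) e < \<delta>
                \<longrightarrow> (\<forall>t\<in>{0..<T}. dist (x t) e < \<epsilon>)) \<and>
     (\<exists>\<delta>>0. \<forall>x. ode_solution F x {0..} \<and> dist (x 0) e < \<delta> \<longrightarrow> (x \<longlongrightarrow> e) at_top)"

end

theory Submission
  imports Defs "HOL-Real_Asymp.Real_Asymp"
begin

text \<open>At an interior equilibrium \<open>(f, m)\<close>, \<open>m = \<mu> f\<close>, the root equation yields
  \<open>r \<alpha> m (1 - f - m) = 1 + h\<close> and \<open>(1 - r) \<alpha> f (1 - f - m) = 1 - s\<close>. With these the Jacobian of the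
  field has trace \<open>-\<alpha> f m < 0\<close> and determinant \<open>r (1 - r) \<alpha>\<^sup>2 f m (1 - f - m) (2 (f + m) - 1)\<close>,
  which is positive exactly when \<open>f > 1 / (2 (1 + \<mu>))\<close>, i.e. under the lower bound on \<open>f\<close>. Since
  the field is polynomial, the remainder of its linearisation is \<open>O(|w|\<^sup>2)\<close>, and the principle of
  linearised stability applies; it is proved with an explicit quadratic Lyapunov function, whose
  decay along solutions is propagated by a first-exit argument.\<close>

section \<open>Quadratic Lyapunov functions\<close>

lemma exp_weighted_nonincreasing:
  fixes W W' :: "real \<Rightarrow> real"
  assumes "0 \<le> t" and cont: "continuous_on {0..t} W"
    and deriv: "\<And>\<tau>. 0 < \<tau> \<Longrightarrow> \<tau> < t \<Longrightarrow> (W has_real_derivative W' \<tau>) (at \<tau>)"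
    and decay: "\<And>\<tau>. 0 < \<tau> \<Longrightarrow> \<tau> < t \<Longrightarrow> W' \<tau> \<le> - \<gamma> * W \<tau>"
  shows "W t * exp (\<gamma> * t) \<le> W 0"
proof -
  have "(\<lambda>\<tau>. W \<tau> * exp (\<gamma> * \<tau>)) t \<le> (\<lambda>\<tau>. W \<tau> * exp (\<gamma> * \<tau>)) 0"
  proof (rule DERIV_nonpos_imp_decreasing_open[OF \<open>0 \<le> t\<close>])
    fix \<tau> assume \<tau>: "0 < \<tau>" "\<tau> < t"
    have "((\<lambda>\<tau>. W \<tau> * exp (\<gamma> * \<tau>)) has_real_derivative (W' \<tau> + \<gamma> * W \<tau>) * exp (\<gamma> * \<tau>)) (at \<tau>)"
      using deriv[OF \<tau>] by (auto intro!: derivative_eq_intros simp: algebra_simps)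
    moreover have "(W' \<tau> + \<gamma> * W \<tau>) * exp (\<gamma> * \<tau>) \<le> 0"
      using decay[OF \<tau>] by (simp add: mult_nonpos_nonneg)
    ultimately show "\<exists>y. ((\<lambda>\<tau>. W \<tau> * exp (\<gamma> * \<tau>)) has_real_derivative y) (at \<tau>) \<and> y \<le> 0"
      by blast
  next
    show "continuous_on {0..t} (\<lambda>\<tau>. W \<tau> * exp (\<gamma> * \<tau>))"
      using cont by (intro continuous_intros)
  qed
  then show ?thesis by simp
qed

lemma lyapunov_sublevel_invariant:
  fixes W W' :: "real \<Rightarrow> real" and I :: "real set"
  assumes I: "0 \<in> I" "I \<subseteq> {0..}" "\<And>t. t \<in> I \<Longrightarrow> {0..t} \<subseteq> I"
    and deriv: "\<And>t. t \<in> I \<Longrightarrow> (W has_real_derivative W' t) (at t within I)"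
    and decay: "\<And>t. t \<in> I \<Longrightarrow> W t \<le> \<rho> \<Longrightarrow> W' t \<le> - \<gamma> * W t"
    and nonneg: "\<And>t. t \<in> I \<Longrightarrow> 0 \<le> W t" and "0 \<le> \<gamma>" and "W 0 < \<rho>"
    and t: "t \<in> I"
  shows "W t * exp (\<gamma> * t) \<le> W 0 \<and> W t < \<rho>"
proof -
  have cont: "continuous_on I W"
    using deriv by (meson DERIV_continuous continuous_on_eq_continuous_within)
  have decay_until: "W t * exp (\<gamma> * t) \<le> W 0"
    if t: "t \<in> I" and below: "\<forall>\<tau>\<in>{0<..<t}. W \<tau> \<le> \<rho>" for t
  proof (rule exp_weighted_nonincreasing)
    show "0 \<le> t" using t I(2) by auto
    show "continuous_on {0..t} W"
      using cont I(3)[OF t] by (rule continuous_on_subset)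
  next
    fix \<tau> assume \<tau>: "0 < \<tau>" "\<tau> < t"
    have "\<tau> \<in> I" and sub: "{0<..<t} \<subseteq> I" using I(3)[OF t] \<tau> by auto
    have "(W has_real_derivative W' \<tau>) (at \<tau> within {0<..<t})"
      using has_field_derivative_subset[OF deriv[OF \<open>\<tau> \<in> I\<close>] sub] .
    moreover have "at \<tau> within {0<..<t} = at \<tau>"
      using \<tau> by (intro at_within_open) auto
    ultimately show "(W has_real_derivative W' \<tau>) (at \<tau>)" by simp
    show "W' \<tau> \<le> - \<gamma> * W \<tau>" using decay below \<open>\<tau> \<in> I\<close> \<tau> by auto
  qed
  have below: "W t < \<rho>" if t: "t \<in> I" for t
  proof (rule ccontr)
    assume "\<not> W t < \<rho>"
    \<comment> \<open>Look at the first time the level \<open>\<rho>\<close> is reached.\<close>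
    define S where "S = {0..t} \<inter> W -` {\<rho>..}"
    have "continuous_on {0..t} W"
      using cont I(3)[OF t] by (rule continuous_on_subset)
    then have "closed S" unfolding S_def by (intro continuous_closed_preimage) auto
    moreover have "t \<in> S" using \<open>\<not> W t < \<rho>\<close> t I(2) by (auto simp: S_def)
    moreover have bdd: "bdd_below S" unfolding S_def by (rule bdd_belowI[of _ 0]) auto
    ultimately have t1: "Inf S \<in> S" by (intro closed_contains_Inf) auto
    then have "Inf S \<in> I" "\<rho> \<le> W (Inf S)" using I(3)[OF t] by (auto simp: S_def)
    moreover have "\<forall>\<tau>\<in>{0<..<Inf S}. W \<tau> \<le> \<rho>"
    proof
      fix \<tau> assume \<tau>: "\<tau> \<in> {0<..<Inf S}"
      then have "\<tau> \<notin> S" using cInf_lower[OF _ bdd, of \<tau>] by auto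
      moreover have "\<tau> \<in> {0..t}" using \<tau> t1 by (auto simp: S_def)
      ultimately show "W \<tau> \<le> \<rho>" by (auto simp: S_def)
    qed
    ultimately have "W (Inf S) * exp (\<gamma> * Inf S) \<le> W 0" by (intro decay_until)
    moreover have "W (Inf S) \<le> W (Inf S) * exp (\<gamma> * Inf S)"
    proof -
      have "0 \<le> \<gamma> * Inf S" using \<open>Inf S \<in> I\<close> I(2) \<open>0 \<le> \<gamma>\<close> by auto
      then show ?thesis using nonneg[OF \<open>Inf S \<in> I\<close>] by (simp add: mult_le_cancel_left1)
    qed
    ultimately show False using \<open>W 0 < \<rho>\<close> \<open>\<rho> \<le> W (Inf S)\<close> by linarith
  qed
  have "\<forall>\<tau>\<in>{0<..<t}. W \<tau> \<le> \<rho>"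
    using below I(3)[OF t] by (meson atLeastAtMost_iff greaterThanLessThan_iff less_imp_le subsetD)
  then show ?thesis using decay_until below t by blast
qed

context
  fixes F :: "'a::real_normed_vector \<Rightarrow> 'a" and V :: "'a \<Rightarrow> real" and DV :: "'a \<Rightarrow> 'a \<Rightarrow> real"
    and e :: 'a and c C \<gamma> \<rho> :: real
  assumes deriv: "\<And>y. (V has_derivative DV y) (at y)"
    and lower: "\<And>y. c * (dist y e)\<^sup>2 \<le> V y" and upper: "\<And>y. V y \<le> C * (dist y e)\<^sup>2"
    and decay: "\<And>y. V y \<le> \<rho> \<Longrightarrow> DV y (F y) \<le> - \<gamma> * V y"
    and pos: "0 < c" "0 < C" "0 < \<gamma>" "0 < \<rho>"
begin

lemma quadratic_lyapunov_below_start: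
  assumes "dist y e < sqrt (\<rho>' / C)" "0 < \<rho>'"
  shows "V y < \<rho>'"
proof -
  have "(dist y e)\<^sup>2 < (sqrt (\<rho>' / C))\<^sup>2"
    using assms by (intro power_strict_mono) auto
  then have "C * (dist y e)\<^sup>2 < \<rho>'" using assms pos(2) by (simp add: field_simps)
  then show ?thesis using upper[of y] by linarith
qed

lemma quadratic_lyapunov_along_solution:
  assumes sol: "ode_solution F x I"
    and I: "0 \<in> I" "I \<subseteq> {0..}" "\<And>t. t \<in> I \<Longrightarrow> {0..t} \<subseteq> I"
    and "\<rho>' \<le> \<rho>" "V (x 0) < \<rho>'" "t \<in> I"
  shows "V (x t) * exp (\<gamma> * t) \<le> V (x 0) \<and> V (x t) < \<rho>'"
proof (rule lyapunov_sublevel_invariant[where W = "\<lambda>t. V (x t)" and W' = "\<lambda>t. DV (x t) (F (x t))"])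
  fix t assume "t \<in> I"
  then have "(x has_vector_derivative F (x t)) (at t within I)"
    using sol by (simp add: ode_solution_def)
  from vector_derivative_diff_chain_within[OF this has_derivative_at_withinI[OF deriv]]
  show "((\<lambda>t. V (x t)) has_real_derivative DV (x t) (F (x t))) (at t within I)"
    by (simp add: o_def has_real_derivative_iff_has_vector_derivative)
next
  show "0 \<le> V (x t)" for t
    using lower[of "x t"] pos(1) by (smt (verit) mult_nonneg_nonneg zero_le_power2)
qed (use assms decay pos in auto)

lemma quadratic_lyapunov_stable:
  assumes "0 < \<epsilon>"
  shows "\<exists>\<delta>>0. \<forall>T>0. \<forall>x. ode_solution F x {0..<T} \<and> dist (x 0) e < \<delta>
           \<longrightarrow> (\<forall>t\<in>{0..<T}. dist (x t) e < \<epsilon>)"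
proof (intro exI conjI allI impI ballI)
  define \<rho>' where "\<rho>' = min \<rho> (c * \<epsilon>\<^sup>2)"
  have "0 < \<rho>'" using pos assms by (simp add: \<rho>'_def)
  then show "0 < sqrt (\<rho>' / C)" using pos(2) by simp
  fix T x t
  assume x: "ode_solution F x {0..<T} \<and> dist (x 0) e < sqrt (\<rho>' / C)" and t: "t \<in> {0..<T}"
  then have "V (x 0) < \<rho>'" using quadratic_lyapunov_below_start \<open>0 < \<rho>'\<close> by blast
  moreover have "0 \<in> {0..<T}" "{0..<T} \<subseteq> {0..}" "\<And>t. t \<in> {0..<T} \<Longrightarrow> {0..t} \<subseteq> {0..<T}"
    using t by auto
  ultimately have "V (x t) < \<rho>'"
    using quadratic_lyapunov_along_solution[of x "{0..<T}" \<rho>' t] x t by (simp add: \<rho>'_def)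
  then have "c * (dist (x t) e)\<^sup>2 < c * \<epsilon>\<^sup>2" using lower[of "x t"] by (simp add: \<rho>'_def)
  then show "dist (x t) e < \<epsilon>"
    using pos(1) assms by (auto intro: power_less_imp_less_base)
qed

lemma quadratic_lyapunov_attractive:
  "\<exists>\<delta>>0. \<forall>x. ode_solution F x {0..} \<and> dist (x 0) e < \<delta> \<longrightarrow> (x \<longlongrightarrow> e) at_top"
proof (intro exI conjI allI impI)
  show "0 < sqrt (\<rho> / C)" using pos by simp
  fix x assume x: "ode_solution F x {0..} \<and> dist (x 0) e < sqrt (\<rho> / C)"
  have bound: "(dist (x t) e)\<^sup>2 \<le> V (x 0) / c * exp (- \<gamma> * t)" if "t \<ge> 0" for t
  proof -
    have "V (x t) * exp (\<gamma> * t) \<le> V (x 0)"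
      using quadratic_lyapunov_along_solution[of x "{0..}" \<rho> t]
        quadratic_lyapunov_below_start[of "x 0" \<rho>] x that pos(4) by auto
    then have "c * (dist (x t) e)\<^sup>2 * exp (\<gamma> * t) \<le> V (x 0)"
      using lower[of "x t"] by (smt (verit) exp_gt_zero mult_right_mono)
    then show ?thesis using pos(1) by (simp add: field_simps exp_minus)
  qed
  have "((\<lambda>t. exp (- \<gamma> * t)) \<longlongrightarrow> 0) at_top"
    using pos(3) by real_asymp
  then have lim: "((\<lambda>t. V (x 0) / c * exp (- \<gamma> * t)) \<longlongrightarrow> 0) at_top"
    by (rule tendsto_mult_right_zero)
  have eventually_bound: "\<forall>\<^sub>F t in at_top. (dist (x t) e)\<^sup>2 \<le> V (x 0) / c * exp (- \<gamma> * t)"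
    using eventually_ge_at_top[of 0] by (rule eventually_mono) (rule bound)
  have "((\<lambda>t. (dist (x t) e)\<^sup>2) \<longlongrightarrow> 0) at_top"
    by (rule tendsto_sandwich[OF always_eventually eventually_bound tendsto_const lim]) simp
  then have "((\<lambda>t. sqrt ((dist (x t) e)\<^sup>2)) \<longlongrightarrow> sqrt 0) at_top"
    by (rule tendsto_real_sqrt)
  then show "(x \<longlongrightarrow> e) at_top" by (simp add: tendsto_dist_iff[of x])
qed

lemma loc_asym_stable_quadratic_lyapunov: "loc_asym_stable F e"
  unfolding loc_asym_stable_def using quadratic_lyapunov_stable quadratic_lyapunov_attractive by blast

end

section \<open>Linearised stability in the plane\<close>

lemma planar_cauchy_schwarz:
  fixes x y u v :: real
  shows "(x * u + y * v)\<^sup>2 \<le> (x\<^sup>2 + y\<^sup>2) * (u\<^sup>2 + v\<^sup>2)"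
proof -
  have "(x\<^sup>2 + y\<^sup>2) * (u\<^sup>2 + v\<^sup>2) - (x * u + y * v)\<^sup>2 = (x * v - y * u)\<^sup>2"
    by (simp add: power2_eq_square algebra_simps)
  then show ?thesis by (metis diff_ge_0_iff_ge zero_le_power2)
qed

lemma abs_lincomb_le:
  fixes x y u v :: real
  assumes "\<bar>u\<bar> \<le> B" "\<bar>v\<bar> \<le> B"
  shows "\<bar>x * u + y * v\<bar> \<le> (\<bar>x\<bar> + \<bar>y\<bar>) * B"
proof -
  have "\<bar>x * u\<bar> \<le> \<bar>x\<bar> * B" "\<bar>y * v\<bar> \<le> \<bar>y\<bar> * B"
    using assms by (simp_all add: abs_mult mult_left_mono)
  then show ?thesis by (simp add: algebra_simps order_trans[OF abs_triangle_ineq])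
qed

text \<open>For \<open>A = [[a, b], [c, d]]\<close> and \<open>w = (u, v)\<close> this is \<open>det A \<parallel>w\<parallel>\<^sup>2 + \<parallel>A w\<parallel>\<^sup>2\<close>. By
  Cayley--Hamilton its derivative along \<open>w' = A w\<close> is \<open>2 tr A \<parallel>A w\<parallel>\<^sup>2\<close>, so it is a strict Lyapunov
  function as soon as \<open>tr A < 0 < det A\<close>.\<close>
definition planar_lyap :: "real \<Rightarrow> real \<Rightarrow> real \<Rightarrow> real \<Rightarrow> real \<Rightarrow> real \<Rightarrow> real" where
  "planar_lyap a b c d u v = (a * d - b * c) * (u\<^sup>2 + v\<^sup>2) + (a * u + b * v)\<^sup>2 + (c * u + d * v)\<^sup>2"

definition planar_lyap_deriv :: "real \<Rightarrow> real \<Rightarrow> real \<Rightarrow> real \<Rightarrow> real \<Rightarrow> real \<Rightarrow> real \<Rightarrow> real \<Rightarrow> real" where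
  "planar_lyap_deriv a b c d u v k1 k2 =
     2 * (a * d - b * c) * (u * k1 + v * k2) + 2 * (a * u + b * v) * (a * k1 + b * k2)
     + 2 * (c * u + d * v) * (c * k1 + d * k2)"

lemma planar_lyap_has_derivative:
  "((\<lambda>y. planar_lyap a b c d (fst y - e1) (snd y - e2)) has_derivative
     (\<lambda>k. planar_lyap_deriv a b c d (fst y - e1) (snd y - e2) (fst k) (snd k))) (at y)"
  unfolding planar_lyap_def planar_lyap_deriv_def
  by (auto intro!: derivative_eq_intros simp: power2_eq_square algebra_simps)

lemma planar_lyap_bounds:
  fixes a b c d u v :: real
  shows "(a * d - b * c) * (u\<^sup>2 + v\<^sup>2) \<le> planar_lyap a b c d u v"
    and "planar_lyap a b c d u v \<le> (a * d - b * c + (a\<^sup>2 + b\<^sup>2 + c\<^sup>2 + d\<^sup>2)) * (u\<^sup>2 + v\<^sup>2)"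
proof -
  show "(a * d - b * c) * (u\<^sup>2 + v\<^sup>2) \<le> planar_lyap a b c d u v"
    unfolding planar_lyap_def by simp
  have "(a * u + b * v)\<^sup>2 \<le> (a\<^sup>2 + b\<^sup>2) * (u\<^sup>2 + v\<^sup>2)" "(c * u + d * v)\<^sup>2 \<le> (c\<^sup>2 + d\<^sup>2) * (u\<^sup>2 + v\<^sup>2)"
    by (rule planar_cauchy_schwarz)+
  then show "planar_lyap a b c d u v \<le> (a * d - b * c + (a\<^sup>2 + b\<^sup>2 + c\<^sup>2 + d\<^sup>2)) * (u\<^sup>2 + v\<^sup>2)"
    unfolding planar_lyap_def by (simp add: algebra_simps)
qed

lemma planar_lyap_deriv_linear:
  "planar_lyap_deriv a b c d u v (a * u + b * v) (c * u + d * v)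
     = 2 * (a + d) * ((a * u + b * v)\<^sup>2 + (c * u + d * v)\<^sup>2)"
  unfolding planar_lyap_deriv_def by (simp add: power2_eq_square algebra_simps)

lemma planar_lyap_deriv_add:
  "planar_lyap_deriv a b c d u v (k1 + l1) (k2 + l2)
     = planar_lyap_deriv a b c d u v k1 k2 + planar_lyap_deriv a b c d u v l1 l2"
  unfolding planar_lyap_deriv_def by (simp add: algebra_simps)

text \<open>\<open>w = adj A (A w) / det A\<close>, and the Frobenius norm of \<open>adj A\<close> is that of \<open>A\<close>.\<close>
lemma det_sq_mult_norm_le:
  fixes a b c d u v :: real
  shows "(a * d - b * c)\<^sup>2 * (u\<^sup>2 + v\<^sup>2) \<le> (a\<^sup>2 + b\<^sup>2 + c\<^sup>2 + d\<^sup>2) * ((a * u + b * v)\<^sup>2 + (c * u + d * v)\<^sup>2)"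
proof -
  have "(a * d - b * c)\<^sup>2 * (u\<^sup>2 + v\<^sup>2)
      = (d * (a * u + b * v) + (- b) * (c * u + d * v))\<^sup>2 + ((- c) * (a * u + b * v) + a * (c * u + d * v))\<^sup>2"
    by (simp add: power2_eq_square algebra_simps)
  also have "\<dots> \<le> (d\<^sup>2 + (- b)\<^sup>2) * ((a * u + b * v)\<^sup>2 + (c * u + d * v)\<^sup>2)
                  + ((- c)\<^sup>2 + a\<^sup>2) * ((a * u + b * v)\<^sup>2 + (c * u + d * v)\<^sup>2)"
    by (intro add_mono planar_cauchy_schwarz)
  finally show ?thesis by (simp add: algebra_simps)
qed

lemma planar_lyap_deriv_abs_le:
  fixes a b c d u v k1 k2 :: real
  assumes "\<bar>u\<bar> \<le> \<sigma>" "\<bar>v\<bar> \<le> \<sigma>" "\<bar>k1\<bar> \<le> \<epsilon>" "\<bar>k2\<bar> \<le> \<epsilon>"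
  shows "\<bar>planar_lyap_deriv a b c d u v k1 k2\<bar>
           \<le> 2 * (2 * \<bar>a * d - b * c\<bar> + (\<bar>a\<bar> + \<bar>b\<bar>)\<^sup>2 + (\<bar>c\<bar> + \<bar>d\<bar>)\<^sup>2) * \<sigma> * \<epsilon>"
proof -
  define D where "D = a * d - b * c"
  define X where "X = u * k1 + v * k2"
  define Y where "Y = (a * u + b * v) * (a * k1 + b * k2)"
  define Z where "Z = (c * u + d * v) * (c * k1 + d * k2)"
  have "0 \<le> \<sigma>" "0 \<le> \<epsilon>" using assms(1,3) by linarith+
  have "\<bar>u * k1\<bar> \<le> \<sigma> * \<epsilon>" "\<bar>v * k2\<bar> \<le> \<sigma> * \<epsilon>"
    unfolding abs_mult using assms by (intro mult_mono; simp)+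
  then have "\<bar>X\<bar> \<le> 2 * (\<sigma> * \<epsilon>)" unfolding X_def by linarith
  then have X: "\<bar>D\<bar> * \<bar>X\<bar> \<le> \<bar>D\<bar> * (2 * (\<sigma> * \<epsilon>))"
    by (rule mult_left_mono) simp
  have Y: "\<bar>Y\<bar> \<le> ((\<bar>a\<bar> + \<bar>b\<bar>) * \<sigma>) * ((\<bar>a\<bar> + \<bar>b\<bar>) * \<epsilon>)"
    and Z: "\<bar>Z\<bar> \<le> ((\<bar>c\<bar> + \<bar>d\<bar>) * \<sigma>) * ((\<bar>c\<bar> + \<bar>d\<bar>) * \<epsilon>)"
    unfolding Y_def Z_def abs_mult using assms by (intro mult_mono abs_lincomb_le; simp)+
  have "\<bar>planar_lyap_deriv a b c d u v k1 k2\<bar> = \<bar>2 * D * X + 2 * Y + 2 * Z\<bar>"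
    unfolding planar_lyap_deriv_def D_def X_def Y_def Z_def by (simp only: mult.assoc)
  also have "\<dots> \<le> 2 * (\<bar>D\<bar> * \<bar>X\<bar>) + 2 * \<bar>Y\<bar> + 2 * \<bar>Z\<bar>"
    using abs_triangle_ineq[of "2 * D * X + 2 * Y" "2 * Z"] abs_triangle_ineq[of "2 * D * X" "2 * Y"]
    by (simp add: abs_mult)
  also have "\<dots> \<le> 2 * (2 * \<bar>D\<bar> + (\<bar>a\<bar> + \<bar>b\<bar>)\<^sup>2 + (\<bar>c\<bar> + \<bar>d\<bar>)\<^sup>2) * \<sigma> * \<epsilon>"
    using X Y Z by (simp add: power2_eq_square algebra_simps)
  finally show ?thesis unfolding D_def .
qed

lemma planar_lyap_deriv_perturbed_le:
  fixes a b c d u v k1 k2 \<epsilon> :: real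
  assumes "a + d \<le> 0" "0 < a\<^sup>2 + b\<^sup>2 + c\<^sup>2 + d\<^sup>2"
    and k: "\<bar>k1 - (a * u + b * v)\<bar> \<le> \<epsilon>" "\<bar>k2 - (c * u + d * v)\<bar> \<le> \<epsilon>"
  shows "planar_lyap_deriv a b c d u v k1 k2
           \<le> 2 * (a + d) * (a * d - b * c)\<^sup>2 / (a\<^sup>2 + b\<^sup>2 + c\<^sup>2 + d\<^sup>2) * (u\<^sup>2 + v\<^sup>2)
             + 2 * (2 * \<bar>a * d - b * c\<bar> + (\<bar>a\<bar> + \<bar>b\<bar>)\<^sup>2 + (\<bar>c\<bar> + \<bar>d\<bar>)\<^sup>2) * sqrt (u\<^sup>2 + v\<^sup>2) * \<epsilon>"
proof -
  define N where "N = a\<^sup>2 + b\<^sup>2 + c\<^sup>2 + d\<^sup>2"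
  have "(a * d - b * c)\<^sup>2 * (u\<^sup>2 + v\<^sup>2) / N \<le> (a * u + b * v)\<^sup>2 + (c * u + d * v)\<^sup>2"
    using det_sq_mult_norm_le[where a = a and b = b and c = c and d = d and u = u and v = v] assms(2)
    by (simp add: N_def pos_divide_le_eq mult.commute)
  then have linear: "planar_lyap_deriv a b c d u v (a * u + b * v) (c * u + d * v)
                       \<le> 2 * (a + d) * ((a * d - b * c)\<^sup>2 * (u\<^sup>2 + v\<^sup>2) / N)"
    unfolding planar_lyap_deriv_linear using assms(1) by (intro mult_left_mono_neg) auto
  have "\<bar>u\<bar> \<le> sqrt (u\<^sup>2 + v\<^sup>2)" "\<bar>v\<bar> \<le> sqrt (u\<^sup>2 + v\<^sup>2)" by simp_all
  from planar_lyap_deriv_abs_le[where a = a and b = b and c = c and d = d, OF this k]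
  have perturbation: "planar_lyap_deriv a b c d u v (k1 - (a * u + b * v)) (k2 - (c * u + d * v))
      \<le> 2 * (2 * \<bar>a * d - b * c\<bar> + (\<bar>a\<bar> + \<bar>b\<bar>)\<^sup>2 + (\<bar>c\<bar> + \<bar>d\<bar>)\<^sup>2) * sqrt (u\<^sup>2 + v\<^sup>2) * \<epsilon>"
    by (rule abs_le_D1)
  show ?thesis
    using linear perturbation planar_lyap_deriv_add[of a b c d u v "a * u + b * v" "k1 - (a * u + b * v)"
        "c * u + d * v" "k2 - (c * u + d * v)"]
    by (simp add: N_def)
qed

lemma planar_lyap_decay:
  fixes a b c d K :: real
  assumes "a + d < 0" "0 < a * d - b * c" "0 \<le> K"
  obtains \<gamma> \<rho> where "0 < \<gamma>" "0 < \<rho>"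
    and "\<And>u v. planar_lyap a b c d u v \<le> \<rho> \<Longrightarrow> u\<^sup>2 + v\<^sup>2 \<le> 1"
    and "\<And>u v k1 k2. planar_lyap a b c d u v \<le> \<rho> \<Longrightarrow>
           \<bar>k1 - (a * u + b * v)\<bar> \<le> K * (u\<^sup>2 + v\<^sup>2) \<Longrightarrow> \<bar>k2 - (c * u + d * v)\<bar> \<le> K * (u\<^sup>2 + v\<^sup>2) \<Longrightarrow>
           planar_lyap_deriv a b c d u v k1 k2 \<le> - \<gamma> * planar_lyap a b c d u v"
proof -
  define D where "D = a * d - b * c"
  define N where "N = a\<^sup>2 + b\<^sup>2 + c\<^sup>2 + d\<^sup>2"
  define G where "G = - (a + d) * D\<^sup>2 / N"
  define M where "M = 2 * (2 * \<bar>D\<bar> + (\<bar>a\<bar> + \<bar>b\<bar>)\<^sup>2 + (\<bar>c\<bar> + \<bar>d\<bar>)\<^sup>2) * K"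
  define \<delta> where "\<delta> = min 1 (G / (M + 1))"
  have "0 < D" using assms(2) by (simp add: D_def)
  have "0 < N"
  proof (rule ccontr)
    assume "\<not> 0 < N"
    then have "a = 0 \<and> b = 0" unfolding N_def by (smt (verit) zero_le_power2 power2_less_eq_zero_iff)
    then show False using \<open>0 < D\<close> by (simp add: D_def)
  qed
  have "0 < G" unfolding G_def using assms(1) \<open>0 < D\<close> \<open>0 < N\<close> by (simp add: divide_pos_pos)
  have "0 \<le> M" unfolding M_def using assms(3) by simp
  have "0 < \<delta>" "\<delta> \<le> 1" unfolding \<delta>_def using \<open>0 < G\<close> \<open>0 \<le> M\<close> by auto
  have "M * \<delta> \<le> G"
  proof -
    have "M * \<delta> \<le> (M + 1) * (G / (M + 1))"
      unfolding \<delta>_def using \<open>0 \<le> M\<close> \<open>0 < G\<close> by (intro mult_mono) auto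
    then show ?thesis using \<open>0 \<le> M\<close> by simp
  qed
  have small: "u\<^sup>2 + v\<^sup>2 \<le> \<delta>\<^sup>2" if "planar_lyap a b c d u v \<le> D * \<delta>\<^sup>2" for u v
    using planar_lyap_bounds(1)[where a = a and b = b and c = c and d = d and u = u and v = v]
      that \<open>0 < D\<close> unfolding D_def
    by (meson mult_le_cancel_left_pos order_trans)
  show thesis
  proof (rule that[of "G / (D + N)" "D * \<delta>\<^sup>2"])
    show "0 < G / (D + N)" "0 < D * \<delta>\<^sup>2" using \<open>0 < G\<close> \<open>0 < D\<close> \<open>0 < N\<close> \<open>0 < \<delta>\<close> by auto
    show "u\<^sup>2 + v\<^sup>2 \<le> 1" if "planar_lyap a b c d u v \<le> D * \<delta>\<^sup>2" for u v
      using small[OF that] \<open>0 < \<delta>\<close> \<open>\<delta> \<le> 1\<close> by (smt (verit) power_le_one)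
  next
    fix u v k1 k2
    assume V: "planar_lyap a b c d u v \<le> D * \<delta>\<^sup>2"
      and k: "\<bar>k1 - (a * u + b * v)\<bar> \<le> K * (u\<^sup>2 + v\<^sup>2)" "\<bar>k2 - (c * u + d * v)\<bar> \<le> K * (u\<^sup>2 + v\<^sup>2)"
    define n where "n = u\<^sup>2 + v\<^sup>2"
    have "0 \<le> n" unfolding n_def by simp
    have "sqrt n \<le> \<delta>" unfolding n_def using small[OF V] \<open>0 < \<delta>\<close> by (intro real_le_lsqrt) auto
    then have "M * sqrt n * n \<le> G * n"
      using \<open>M * \<delta> \<le> G\<close> \<open>0 \<le> M\<close> \<open>0 \<le> n\<close> by (smt (verit) mult_left_mono mult_right_mono)
    moreover have "planar_lyap_deriv a b c d u v k1 k2 \<le> - 2 * G * n + M * sqrt n * n"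
      using planar_lyap_deriv_perturbed_le[OF _ _ k] assms(1) \<open>0 < N\<close>
      unfolding G_def M_def D_def N_def n_def by (simp add: algebra_simps)
    ultimately have "planar_lyap_deriv a b c d u v k1 k2 \<le> - (G / (D + N)) * ((D + N) * n)"
      using \<open>0 < D\<close> \<open>0 < N\<close> by simp
    also have "\<dots> \<le> - (G / (D + N)) * planar_lyap a b c d u v"
      using planar_lyap_bounds(2)[of a b c d u v] \<open>0 < G\<close> \<open>0 < D\<close> \<open>0 < N\<close>
      unfolding D_def N_def n_def by (intro mult_left_mono_neg) auto
    finally show "planar_lyap_deriv a b c d u v k1 k2 \<le> - (G / (D + N)) * planar_lyap a b c d u v" .
  qed
qed

theorem loc_asym_stable_planar_linearization:
  fixes F :: "real \<times> real \<Rightarrow> real \<times> real"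
  assumes "a + d < 0" "0 < a * d - b * c" "0 \<le> K"
    and remainder: "\<And>u v. u\<^sup>2 + v\<^sup>2 \<le> 1 \<Longrightarrow>
           \<bar>fst (F (e1 + u, e2 + v)) - (a * u + b * v)\<bar> \<le> K * (u\<^sup>2 + v\<^sup>2) \<and>
           \<bar>snd (F (e1 + u, e2 + v)) - (c * u + d * v)\<bar> \<le> K * (u\<^sup>2 + v\<^sup>2)"
  shows "loc_asym_stable F (e1, e2)"
proof -
  obtain \<gamma> \<rho> where "0 < \<gamma>" "0 < \<rho>"
    and near: "\<And>u v. planar_lyap a b c d u v \<le> \<rho> \<Longrightarrow> u\<^sup>2 + v\<^sup>2 \<le> 1"
    and decay: "\<And>u v k1 k2. planar_lyap a b c d u v \<le> \<rho> \<Longrightarrow>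
           \<bar>k1 - (a * u + b * v)\<bar> \<le> K * (u\<^sup>2 + v\<^sup>2) \<Longrightarrow> \<bar>k2 - (c * u + d * v)\<bar> \<le> K * (u\<^sup>2 + v\<^sup>2) \<Longrightarrow>
           planar_lyap_deriv a b c d u v k1 k2 \<le> - \<gamma> * planar_lyap a b c d u v"
    using planar_lyap_decay[OF assms(1-3)] by blast
  have dist_sq: "(dist y (e1, e2))\<^sup>2 = (fst y - e1)\<^sup>2 + (snd y - e2)\<^sup>2" for y :: "real \<times> real"
    by (cases y) (simp add: dist_Pair_Pair dist_real_def)
  show ?thesis
  proof (rule loc_asym_stable_quadratic_lyapunov[OF planar_lyap_has_derivative])
    show "(a * d - b * c) * (dist y (e1, e2))\<^sup>2 \<le> planar_lyap a b c d (fst y - e1) (snd y - e2)"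
      and "planar_lyap a b c d (fst y - e1) (snd y - e2)
             \<le> (a * d - b * c + (a\<^sup>2 + b\<^sup>2 + c\<^sup>2 + d\<^sup>2)) * (dist y (e1, e2))\<^sup>2" for y
      unfolding dist_sq by (rule planar_lyap_bounds)+
  next
    fix y :: "real \<times> real"
    assume V: "planar_lyap a b c d (fst y - e1) (snd y - e2) \<le> \<rho>"
    have y: "y = (e1 + (fst y - e1), e2 + (snd y - e2))" by simp
    show "planar_lyap_deriv a b c d (fst y - e1) (snd y - e2) (fst (F y)) (snd (F y))
            \<le> - \<gamma> * planar_lyap a b c d (fst y - e1) (snd y - e2)"
      using remainder[OF near[OF V]] by (intro decay[OF V]) (simp_all flip: y)
  qed (use assms(2) \<open>0 < \<gamma>\<close> \<open>0 < \<rho>\<close> in \<open>auto intro: add_pos_nonneg\<close>)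
qed

section \<open>The FHMS model\<close>

definition fhms_nonlinear :: "real \<Rightarrow> real \<Rightarrow> real \<Rightarrow> real \<Rightarrow> real" where
  "fhms_nonlinear f m u v = u * v * (1 - 2 * f - 2 * m) - m * u\<^sup>2 - f * v\<^sup>2 - u\<^sup>2 * v - u * v\<^sup>2"

lemma fhms_field_shift:
  "fhms_field r \<alpha> h s (f + u, m + v) = fhms_field r \<alpha> h s (f, m)
     + ((r * \<alpha> * m * (1 - 2 * f - m) - (1 + h)) * u + r * \<alpha> * f * (1 - f - 2 * m) * v
          + r * \<alpha> * fhms_nonlinear f m u v,
        (1 - r) * \<alpha> * m * (1 - 2 * f - m) * u + ((1 - r) * \<alpha> * f * (1 - f - 2 * m) + s - 1) * v
          + (1 - r) * \<alpha> * fhms_nonlinear f m u v)"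
  unfolding fhms_field_def fhms_nonlinear_def by (simp add: power2_eq_square algebra_simps)

lemma fhms_nonlinear_bound:
  fixes f m u v :: real
  assumes "u\<^sup>2 + v\<^sup>2 \<le> 1" "0 \<le> f" "0 \<le> m"
  shows "\<bar>fhms_nonlinear f m u v\<bar> \<le> (\<bar>1 - 2 * f - 2 * m\<bar> + f + m + 2) * (u\<^sup>2 + v\<^sup>2)"
proof -
  define n where "n = u\<^sup>2 + v\<^sup>2"
  have "u\<^sup>2 \<le> n" "v\<^sup>2 \<le> n" by (simp_all add: n_def)
  then have "u\<^sup>2 \<le> 1" "v\<^sup>2 \<le> 1" using assms(1) unfolding n_def by linarith+
  then have "\<bar>u\<bar> \<le> 1" "\<bar>v\<bar> \<le> 1" by (simp_all add: abs_square_le_1)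
  have "2 * \<bar>u * v\<bar> \<le> n"
    using sum_squares_bound[of "\<bar>u\<bar>" "\<bar>v\<bar>"] by (simp add: n_def abs_mult mult.assoc)
  then have "\<bar>u * v\<bar> \<le> n" by simp
  have "\<bar>u * v * (1 - 2 * f - 2 * m)\<bar> \<le> \<bar>1 - 2 * f - 2 * m\<bar> * n"
    unfolding abs_mult[of "u * v"] using \<open>\<bar>u * v\<bar> \<le> n\<close> by (simp add: mult_right_mono mult.commute)
  moreover have "\<bar>m * u\<^sup>2\<bar> \<le> m * n" "\<bar>f * v\<^sup>2\<bar> \<le> f * n"
    using \<open>u\<^sup>2 \<le> n\<close> \<open>v\<^sup>2 \<le> n\<close> assms(2,3) by (simp_all add: abs_mult mult_left_mono)
  moreover have "\<bar>u\<^sup>2 * v\<bar> \<le> n"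
  proof -
    have "\<bar>u\<^sup>2 * v\<bar> = u\<^sup>2 * \<bar>v\<bar>" by (simp add: abs_mult)
    also have "\<dots> \<le> u\<^sup>2 * 1" using \<open>\<bar>v\<bar> \<le> 1\<close> by (intro mult_left_mono) auto
    finally show ?thesis using \<open>u\<^sup>2 \<le> n\<close> by simp
  qed
  moreover have "\<bar>u * v\<^sup>2\<bar> \<le> n"
  proof -
    have "\<bar>u * v\<^sup>2\<bar> = \<bar>u\<bar> * v\<^sup>2" by (simp add: abs_mult)
    also have "\<dots> \<le> 1 * v\<^sup>2" using \<open>\<bar>u\<bar> \<le> 1\<close> by (intro mult_right_mono) auto
    finally show ?thesis using \<open>v\<^sup>2 \<le> n\<close> by simp
  qed
  ultimately show ?thesis
    unfolding fhms_nonlinear_def n_def[symmetric] abs_le_iff by (simp add: algebra_simps)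
qed

lemma fhms_field_near_equilibrium:
  assumes "r * \<alpha> * m * (1 - f - m) = 1 + h" "(1 - r) * \<alpha> * f * (1 - f - m) = 1 - s"
  shows "fhms_field r \<alpha> h s (f + u, m + v) =
           (- r * \<alpha> * f * m * u + r * \<alpha> * f * (1 - f - 2 * m) * v + r * \<alpha> * fhms_nonlinear f m u v,
            (1 - r) * \<alpha> * m * (1 - 2 * f - m) * u - (1 - r) * \<alpha> * f * m * v
              + (1 - r) * \<alpha> * fhms_nonlinear f m u v)"
proof -
  have "fhms_field r \<alpha> h s (f, m) = (f * (r * \<alpha> * m * (1 - f - m) - (1 + h)),
                                      m * ((1 - r) * \<alpha> * f * (1 - f - m) - (1 - s)))"
    unfolding fhms_field_def by (simp add: algebra_simps)
  also have "\<dots> = 0" using assms by (simp add: zero_prod_def)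
  finally have equilibrium: "fhms_field r \<alpha> h s (f, m) = 0" .
  have "r * \<alpha> * m * (1 - 2 * f - m) = r * \<alpha> * m * (1 - f - m) - r * \<alpha> * f * m"
    "(1 - r) * \<alpha> * f * (1 - f - 2 * m) = (1 - r) * \<alpha> * f * (1 - f - m) - (1 - r) * \<alpha> * f * m"
    by (simp_all add: algebra_simps)
  then have diagonal: "r * \<alpha> * m * (1 - 2 * f - m) - (1 + h) = - r * \<alpha> * f * m"
    "(1 - r) * \<alpha> * f * (1 - f - 2 * m) + s - 1 = - (1 - r) * \<alpha> * f * m"
    using assms by linarith+
  show ?thesis
    unfolding fhms_field_shift equilibrium diagonal by (simp add: algebra_simps)
qed

lemma fhms_mu_balance:
  assumes "r \<noteq> 0" "s \<noteq> 1"
  shows "fhms_mu r h s * (r * (1 - s)) = (1 - r) * (1 + h)"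
  using assms by (simp add: fhms_mu_def)

lemma fhms_interior_equilibrium:
  assumes "0 < r" "r < 1" "0 < \<alpha>" "0 \<le> h" "s < 1" "0 < f"
    and root: "r * \<alpha> * fhms_mu r h s * f * (1 - (1 + fhms_mu r h s) * f) = 1 + h"
  defines "m \<equiv> fhms_mu r h s * f"
  shows "r * \<alpha> * m * (1 - f - m) = 1 + h"
    and "(1 - r) * \<alpha> * f * (1 - f - m) = 1 - s"
    and "0 < 1 - f - m"
proof -
  have "0 < fhms_mu r h s" unfolding fhms_mu_def using assms(1-5) by simp
  have "r * \<alpha> * m * (1 - f - m) = r * \<alpha> * fhms_mu r h s * f * (1 - (1 + fhms_mu r h s) * f)"
    unfolding m_def by (simp add: algebra_simps)
  then show eq1: "r * \<alpha> * m * (1 - f - m) = 1 + h" using root by simp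
  have "0 < r * \<alpha> * m" unfolding m_def using assms(1,3,6) \<open>0 < fhms_mu r h s\<close> by simp
  moreover have "0 < (r * \<alpha> * m) * (1 - f - m)" using eq1 assms(4) by simp
  ultimately show "0 < 1 - f - m" using zero_less_mult_pos by blast
  have "((1 - r) * \<alpha> * f * (1 - f - m)) * (r * fhms_mu r h s) = (1 - r) * (r * \<alpha> * m * (1 - f - m))"
    unfolding m_def by (simp add: algebra_simps)
  also have "\<dots> = (1 - r) * (1 + h)" using eq1 by simp
  also have "\<dots> = (1 - s) * (r * fhms_mu r h s)"
    using fhms_mu_balance[of r s h] assms(1,5) by (simp add: mult_ac)
  finally show "(1 - r) * \<alpha> * f * (1 - f - m) = 1 - s"
    using \<open>0 < fhms_mu r h s\<close> assms(1) by simp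
qed

lemma fhms_jacobian_hurwitz:
  fixes r \<alpha> f m :: real
  assumes "0 < r" "r < 1" "0 < \<alpha>" "0 < f" "0 < m" "0 < 1 - f - m" "1 < 2 * (f + m)"
  shows "- r * \<alpha> * f * m + - (1 - r) * \<alpha> * f * m < 0"
    and "0 < (- r * \<alpha> * f * m) * (- (1 - r) * \<alpha> * f * m)
              - (r * \<alpha> * f * (1 - f - 2 * m)) * ((1 - r) * \<alpha> * m * (1 - 2 * f - m))"
proof -
  show "- r * \<alpha> * f * m + - (1 - r) * \<alpha> * f * m < 0"
    using assms(3-5) by (simp add: algebra_simps)
  have "(- r * \<alpha> * f * m) * (- (1 - r) * \<alpha> * f * m)
          - (r * \<alpha> * f * (1 - f - 2 * m)) * ((1 - r) * \<alpha> * m * (1 - 2 * f - m))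
        = r * (1 - r) * \<alpha>\<^sup>2 * f * m * (1 - f - m) * (2 * (f + m) - 1)"
    by (simp add: power2_eq_square algebra_simps)
  then show "0 < (- r * \<alpha> * f * m) * (- (1 - r) * \<alpha> * f * m)
                 - (r * \<alpha> * f * (1 - f - 2 * m)) * ((1 - r) * \<alpha> * m * (1 - 2 * f - m))"
    using assms by simp
qed

lemma fhms_field_linear_remainder:
  assumes "0 < r" "r < 1" "0 < \<alpha>" "0 \<le> f" "0 \<le> m"
    and equilibrium: "r * \<alpha> * m * (1 - f - m) = 1 + h" "(1 - r) * \<alpha> * f * (1 - f - m) = 1 - s"
    and "u\<^sup>2 + v\<^sup>2 \<le> 1"
  shows "\<bar>fst (fhms_field r \<alpha> h s (f + u, m + v))
            - (- r * \<alpha> * f * m * u + r * \<alpha> * f * (1 - f - 2 * m) * v)\<bar>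
           \<le> \<alpha> * (\<bar>1 - 2 * f - 2 * m\<bar> + f + m + 2) * (u\<^sup>2 + v\<^sup>2) \<and>
         \<bar>snd (fhms_field r \<alpha> h s (f + u, m + v))
            - ((1 - r) * \<alpha> * m * (1 - 2 * f - m) * u + - (1 - r) * \<alpha> * f * m * v)\<bar>
           \<le> \<alpha> * (\<bar>1 - 2 * f - 2 * m\<bar> + f + m + 2) * (u\<^sup>2 + v\<^sup>2)"
proof -
  define E where "E = \<alpha> * \<bar>fhms_nonlinear f m u v\<bar>"
  have "fst (fhms_field r \<alpha> h s (f + u, m + v))
           - (- r * \<alpha> * f * m * u + r * \<alpha> * f * (1 - f - 2 * m) * v) = r * (\<alpha> * fhms_nonlinear f m u v)"
    "snd (fhms_field r \<alpha> h s (f + u, m + v))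
       - ((1 - r) * \<alpha> * m * (1 - 2 * f - m) * u + - (1 - r) * \<alpha> * f * m * v)
       = (1 - r) * (\<alpha> * fhms_nonlinear f m u v)"
    unfolding fhms_field_near_equilibrium[OF equilibrium] by (simp_all add: algebra_simps)
  then have "\<bar>fst (fhms_field r \<alpha> h s (f + u, m + v))
           - (- r * \<alpha> * f * m * u + r * \<alpha> * f * (1 - f - 2 * m) * v)\<bar> = r * E"
    "\<bar>snd (fhms_field r \<alpha> h s (f + u, m + v))
       - ((1 - r) * \<alpha> * m * (1 - 2 * f - m) * u + - (1 - r) * \<alpha> * f * m * v)\<bar> = (1 - r) * E"
    using assms(1-3) by (simp_all add: E_def abs_mult)
  moreover have "E \<le> \<alpha> * (\<bar>1 - 2 * f - 2 * m\<bar> + f + m + 2) * (u\<^sup>2 + v\<^sup>2)"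
    using fhms_nonlinear_bound[OF \<open>u\<^sup>2 + v\<^sup>2 \<le> 1\<close> assms(4,5)] assms(3)
    by (simp add: E_def mult.assoc)
  moreover have "r * E \<le> E" "(1 - r) * E \<le> E"
    using assms(1-3) by (simp_all add: E_def mult_left_le_one_le)
  ultimately show ?thesis by linarith
qed

lemma fhms_threshold_iff:
  assumes "0 < r" "r < 1" "0 \<le> h" "s < 1"
  shows "r * (1 - s) / (2 * (1 + h - r * (h + s))) < f \<longleftrightarrow> 1 < 2 * (f + fhms_mu r h s * f)"
proof -
  have "0 < fhms_mu r h s" unfolding fhms_mu_def using assms by simp
  have "1 + h - r * (h + s) = r * (1 - s) * (1 + fhms_mu r h s)"
    using fhms_mu_balance[of r s h] assms by (simp add: algebra_simps)
  then have "r * (1 - s) / (2 * (1 + h - r * (h + s))) = 1 / (2 * (1 + fhms_mu r h s))"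
    using assms by simp
  then show ?thesis using \<open>0 < fhms_mu r h s\<close> by (simp add: divide_less_eq algebra_simps)
qed

theorem mainTheorem2:
  fixes r \<alpha> h s fi :: real
  assumes "0 < r" "r < 1" "\<alpha> > 0" "h \<ge> 0" "0 \<le> s" "s < 1"
    and "fi > 0"
    and root: "r * \<alpha> * fhms_mu r h s * fi * (1 - (1 + fhms_mu r h s) * fi) = 1 + h"
    and lower: "r * (1 - s) / (2 * (1 + h - r * (h + s))) < fi"
    and "fi < r * (1 - s) / (1 + h - r * (h + s))"
  shows "loc_asym_stable (fhms_field r \<alpha> h s) (fi, fhms_mu r h s * fi)"
proof -
  define mi where "mi = fhms_mu r h s * fi"
  have "0 < mi" unfolding mi_def fhms_mu_def using assms(1-7) by simp
  note equilibrium = fhms_interior_equilibrium[OF assms(1-4,6,7) root, folded mi_def]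
  have "1 < 2 * (fi + mi)" using lower fhms_threshold_iff[OF assms(1,2,4,6)] by (simp add: mi_def)
  note jacobian = fhms_jacobian_hurwitz[OF assms(1-3,7) \<open>0 < mi\<close> equilibrium(3) this]
  have "0 \<le> \<alpha> * (\<bar>1 - 2 * fi - 2 * mi\<bar> + fi + mi + 2)" using assms(3,7) \<open>0 < mi\<close> by simp
  from loc_asym_stable_planar_linearization[OF jacobian this
      fhms_field_linear_remainder[OF assms(1-3) _ _ equilibrium(1,2)]]
  show ?thesis using assms(7) \<open>0 < mi\<close> by (simp add: mi_def)
qed
end
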